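(* Let $f:\{0,1\}^n\to\{0,1\}$ and let $\ell$ be a positive integer. The fraction of vertices of $\{0,1\}^n$ that are non-$\ell$-sticky (with respect to $f$) is at most $\frac{2\ell\cdot\mathbf{I}(f)}{n}$.
   Context: $H_n$ is the undirected hypercube graph on $\{0,1\}^n$ (edges between points at Hamming distance $1$); a random walk step moves to a uniformly random neighbor. An edge $(x,y)$ is influential if $f(x)\ne f(y)$. The total influence is $\mathbf{I}(f)=n\cdot\Pr[f(x)\neq f(y)]$ for a uniformly random edge $(x,y)$ of $H_n$. A vertex $x$ is $\ell$-sticky if an $\ell$-step random walk on $H_n$ starting from $x$ traverses no influential edge with probability at least $1/2$; otherwise $x$ is non-$\ell$-sticky. *)

theory Defs
  imports Main Complex_Main
begin

definition cube :: "nat \<Rightarrow> bool list set" where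
  "cube n = {x. length x = n}"

definition flip :: "nat \<Rightarrow> bool list \<Rightarrow> bool list" where
  "flip i x = x[i := \<not> x ! i]"

definition hedges :: "nat \<Rightarrow> bool list set set" where
  "hedges n = {{x, flip i x} | x i. x \<in> cube n \<and> i < n}"

definition influential :: "(bool list \<Rightarrow> bool) \<Rightarrow> bool list set \<Rightarrow> bool" where
  "influential f e \<longleftrightarrow> (\<exists>x y. e = {x, y} \<and> f x \<noteq> f y)"

definition total_influence :: "nat \<Rightarrow> (bool list \<Rightarrow> bool) \<Rightarrow> real" where
  "total_influence n f =
     real n * (real (card {e \<in> hedges n. influential f e}) / real (card (hedges n)))"

fun no_infl :: "(bool list \<Rightarrow> bool) \<Rightarrow> bool list \<Rightarrow> nat list \<Rightarrow> bool" where
  "no_infl f x [] = True"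
| "no_infl f x (i # is) = (f x = f (flip i x) \<and> no_infl f (flip i x) is)"

text \<open>An l-step random walk = uniformly random sequence of l coordinates in {0..<n}.\<close>
definition walks :: "nat \<Rightarrow> nat \<Rightarrow> nat list set" where
  "walks n l = {is. length is = l \<and> set is \<subseteq> {..<n}}"

definition stay_prob :: "nat \<Rightarrow> (bool list \<Rightarrow> bool) \<Rightarrow> nat \<Rightarrow> bool list \<Rightarrow> real" where
  "stay_prob n f l x =
     real (card {is \<in> walks n l. no_infl f x is}) / real (card (walks n l))"

definition sticky :: "nat \<Rightarrow> (bool list \<Rightarrow> bool) \<Rightarrow> nat \<Rightarrow> bool list \<Rightarrow> bool" where
  "sticky n f l x \<longleftrightarrow> stay_prob n f l x \<ge> 1/2"

end

theory Submission
  imports Defs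
begin

text \<open>A walk of length l from a uniformly random vertex is, after each of its steps, again at a
uniformly random vertex, and its next step then crosses a uniformly random edge. By the union bound
it traverses an influential edge with probability at most l times the fraction of influential
edges, i.e. at most l I(f)/n. A non-l-sticky vertex contributes escape probability more than 1/2,
so by Markov's inequality such vertices form at most a 2 l I(f)/n fraction of the cube.\<close>

lemma length_flip [simp]: "length (flip i x) = length x"
  by (simp add: flip_def)

lemma flip_flip [simp]: "flip i (flip i x) = x"
  by (cases "i < length x") (simp_all add: flip_def list_update_beyond)

lemma flip_neq: "i < length x \<Longrightarrow> flip i x \<noteq> x"
  by (simp add: flip_def list_eq_iff_nth_eq) (metis nth_list_update_eq)

lemma flip_inj: "i < length x \<Longrightarrow> j < length x \<Longrightarrow> flip i x = flip j x \<Longrightarrow> i = j"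
  unfolding flip_def by (metis (full_types) nth_list_update_eq nth_list_update_neq)

lemma flip_in_cube_iff [simp]: "flip i x \<in> cube n \<longleftrightarrow> x \<in> cube n"
  by (simp add: cube_def)

lemma cube_eq_lists: "cube n = {xs. set xs \<subseteq> UNIV \<and> length xs = n}"
  by (auto simp: cube_def)

lemma finite_cube: "finite (cube n)"
  unfolding cube_eq_lists using finite_lists_length_eq[of "UNIV :: bool set" n] by simp

lemma card_cube: "card (cube n) = 2 ^ n"
  unfolding cube_eq_lists using card_lists_length_eq[of "UNIV :: bool set" n] by simp

lemma finite_walks: "finite (walks n l)"
  unfolding walks_def using finite_lists_length_eq[of "{..<n}" l] by (simp add: conj_commute)

lemma card_walks: "card (walks n l) = n ^ l"
  unfolding walks_def using card_lists_length_eq[of "{..<n}" l] by (simp add: conj_commute)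

lemma walks_Suc: "walks n (Suc l) = (\<lambda>(i, is). i # is) ` ({..<n} \<times> walks n l)"
  unfolding walks_def by (auto simp: length_Suc_conv image_iff)

lemma sum_cube_flip: "i < n \<Longrightarrow> (\<Sum>x\<in>cube n. g (flip i x)) = (\<Sum>x\<in>cube n. g x)"
  by (rule sum.reindex_bij_witness[of _ "flip i" "flip i"]) auto

text \<open>A directed edge of H_n is a pair (x, i): the edge from x across coordinate i.\<close>

definition edge_of :: "bool list \<times> nat \<Rightarrow> bool list set" where
  "edge_of p = {fst p, flip (snd p) (fst p)}"

definition reverse_edge :: "bool list \<times> nat \<Rightarrow> bool list \<times> nat" where
  "reverse_edge p = (flip (snd p) (fst p), snd p)"

lemma edge_of_eq_imp:
  assumes "length x = n" "length y = n" "i < n" "j < n" "edge_of (x, i) = edge_of (y, j)"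
  shows "(y, j) = (x, i) \<or> (y, j) = reverse_edge (x, i)"
proof -
  have e: "{x, flip i x} = {y, flip j y}"
    using assms(5) by (simp add: edge_of_def)
  show ?thesis
  proof (cases "x = y")
    case True
    then have "flip i x = flip j x"
      using e flip_neq[of i x] flip_neq[of j x] assms by (metis doubleton_eq_iff)
    then show ?thesis using True flip_inj assms by auto
  next
    case False
    then have "x = flip j y" "y = flip i x"
      using e by (auto simp: doubleton_eq_iff)
    then have "i = j"
      using flip_inj assms by (metis flip_flip)
    then show ?thesis using \<open>y = flip i x\<close> by (simp add: reverse_edge_def)
  qed
qed

lemma card_eq_twice_card_edges:
  assumes S: "S \<subseteq> cube n \<times> {..<n}" and closed: "\<And>p. p \<in> S \<Longrightarrow> reverse_edge p \<in> S"
  shows "card S = 2 * card (edge_of ` S)"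
proof -
  have "finite S" using S finite_cube finite_subset by blast
  have fibre: "card {p \<in> S. edge_of p = edge_of q} = 2" if "q \<in> S" for q
  proof -
    obtain x i where q: "q = (x, i)" by (cases q)
    have x: "length x = n" "i < n" using that q S by (auto simp: cube_def)
    have "{p \<in> S. edge_of p = edge_of q} = {q, reverse_edge q}"
    proof
      show "{p \<in> S. edge_of p = edge_of q} \<subseteq> {q, reverse_edge q}"
        using S edge_of_eq_imp[of x n _ i] x q by (force simp: cube_def)
      show "{q, reverse_edge q} \<subseteq> {p \<in> S. edge_of p = edge_of q}"
        using that closed by (auto simp: edge_of_def reverse_edge_def insert_commute)
    qed
    moreover have "q \<noteq> reverse_edge q"
      using flip_neq[of i x] x q by (auto simp: reverse_edge_def)
    ultimately show ?thesis by simp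
  qed
  have "card S = (\<Sum>e\<in>edge_of ` S. card {p \<in> S. edge_of p = e})"
    using sum.image_gen[OF \<open>finite S\<close>, of "\<lambda>_. 1 :: nat" edge_of] by simp
  also have "\<dots> = (\<Sum>e\<in>edge_of ` S. 2)"
    using fibre by (intro sum.cong) auto
  finally show ?thesis by simp
qed

lemma hedges_eq_edge_of: "hedges n = edge_of ` (cube n \<times> {..<n})"
  unfolding hedges_def edge_of_def by (auto simp: image_iff; blast)

definition sensitive_coords :: "nat \<Rightarrow> (bool list \<Rightarrow> bool) \<Rightarrow> bool list \<Rightarrow> nat set" where
  "sensitive_coords n f x = {i \<in> {..<n}. f x \<noteq> f (flip i x)}"

definition sensitivity :: "nat \<Rightarrow> (bool list \<Rightarrow> bool) \<Rightarrow> bool list \<Rightarrow> nat" where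
  "sensitivity n f x = card (sensitive_coords n f x)"

lemma influential_edges_eq:
  "{e \<in> hedges n. influential f e} = edge_of ` Sigma (cube n) (sensitive_coords n f)"
  unfolding hedges_eq_edge_of edge_of_def influential_def sensitive_coords_def
  by (auto simp: doubleton_eq_iff image_iff) blast+

lemma total_influence_eq_sum_sensitivity:
  assumes "n \<ge> 1"
  shows "total_influence n f = real (\<Sum>x\<in>cube n. sensitivity n f x) / 2 ^ n"
proof -
  have "card (cube n \<times> {..<n}) = 2 * card (hedges n)"
    unfolding hedges_eq_edge_of
    by (rule card_eq_twice_card_edges) (auto simp: reverse_edge_def)
  then have edges: "real (card (hedges n)) = 2 ^ n * real n / 2"
    unfolding card_cartesian_product card_cube card_lessThan
    by (metis nonzero_mult_div_cancel_left of_nat_mult of_nat_numeral of_nat_power zero_neq_numeral)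
  have "card (Sigma (cube n) (sensitive_coords n f)) = 2 * card {e \<in> hedges n. influential f e}"
    unfolding influential_edges_eq
    by (rule card_eq_twice_card_edges) (auto simp: reverse_edge_def sensitive_coords_def)
  then have "real (card {e \<in> hedges n. influential f e}) = real (\<Sum>x\<in>cube n. sensitivity n f x) / 2"
    using finite_cube by (simp add: card_SigmaI sensitivity_def sensitive_coords_def)
  then show ?thesis
    using assms unfolding total_influence_def edges by (simp add: field_simps)
qed

definition escaping_walks :: "nat \<Rightarrow> (bool list \<Rightarrow> bool) \<Rightarrow> nat \<Rightarrow> bool list \<Rightarrow> nat list set" where
  "escaping_walks n f l x = {is \<in> walks n l. \<not> no_infl f x is}"

lemma card_escaping_walks_Suc_le:
  "card (escaping_walks n f (Suc l) x)
     \<le> sensitivity n f x * n ^ l + (\<Sum>i<n. card (escaping_walks n f l (flip i x)))"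
proof -
  let ?cons = "\<lambda>(i :: nat, is). i # is"
  let ?first = "sensitive_coords n f x \<times> walks n l"
  let ?later = "Sigma {..<n} (\<lambda>i. escaping_walks n f l (flip i x))"
  have "escaping_walks n f (Suc l) x \<subseteq> ?cons ` ?first \<union> ?cons ` ?later"
    unfolding escaping_walks_def walks_Suc sensitive_coords_def by auto
  moreover have "finite ?first" "finite ?later"
    using finite_walks by (auto simp: sensitive_coords_def escaping_walks_def)
  ultimately have "card (escaping_walks n f (Suc l) x) \<le> card (?cons ` ?first \<union> ?cons ` ?later)"
    by (intro card_mono) auto
  also have "\<dots> \<le> card (?cons ` ?first) + card (?cons ` ?later)"
    by (rule card_Un_le)
  also have "\<dots> \<le> card ?first + card ?later"
    using \<open>finite ?first\<close> \<open>finite ?later\<close> by (intro add_mono card_image_le)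
  also have "card ?first = sensitivity n f x * n ^ l"
    by (simp add: card_cartesian_product sensitivity_def card_walks)
  also have "card ?later = (\<Sum>i<n. card (escaping_walks n f l (flip i x)))"
    using finite_walks by (simp add: card_SigmaI escaping_walks_def)
  finally show ?thesis .
qed

lemma sum_card_escaping_walks_le:
  "n * (\<Sum>x\<in>cube n. card (escaping_walks n f l x)) \<le> l * n ^ l * (\<Sum>x\<in>cube n. sensitivity n f x)"
proof (induction l)
  case 0
  have "escaping_walks n f 0 x = {}" for x
    by (auto simp: escaping_walks_def walks_def)
  then show ?case by simp
next
  case (Suc l)
  let ?E = "\<lambda>l x. card (escaping_walks n f l x)"
  let ?S = "\<Sum>x\<in>cube n. sensitivity n f x"
  have "(\<Sum>x\<in>cube n. ?E (Suc l) x)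
          \<le> (\<Sum>x\<in>cube n. sensitivity n f x * n ^ l + (\<Sum>i<n. ?E l (flip i x)))"
    by (intro sum_mono card_escaping_walks_Suc_le)
  also have "\<dots> = ?S * n ^ l + (\<Sum>i<n. \<Sum>x\<in>cube n. ?E l (flip i x))"
    by (simp add: sum.distrib sum_distrib_right sum.swap[of _ "cube n"])
  also have "(\<Sum>i<n. \<Sum>x\<in>cube n. ?E l (flip i x)) = n * (\<Sum>x\<in>cube n. ?E l x)"
    using sum_cube_flip[of _ n "?E l"] by simp
  finally have "n * (\<Sum>x\<in>cube n. ?E (Suc l) x) \<le> n * (?S * n ^ l) + n * (n * (\<Sum>x\<in>cube n. ?E l x))"
    by (metis distrib_left mult_le_mono2)
  also have "\<dots> \<le> n * (?S * n ^ l) + n * (l * n ^ l * ?S)"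
    using Suc.IH by simp
  also have "\<dots> = Suc l * n ^ Suc l * ?S"
    by (simp add: algebra_simps)
  finally show ?case .
qed

lemma nonsticky_imp_card_escaping_walks_ge:
  assumes "\<not> sticky n f l x"
  shows "n ^ l \<le> 2 * card (escaping_walks n f l x)"
proof -
  let ?stay = "{is \<in> walks n l. no_infl f x is}"
  have "walks n l = ?stay \<union> escaping_walks n f l x" "?stay \<inter> escaping_walks n f l x = {}"
    by (auto simp: escaping_walks_def)
  then have split: "card ?stay + card (escaping_walks n f l x) = n ^ l"
    using finite_walks card_Un_disjoint[of ?stay "escaping_walks n f l x"]
    by (metis card_walks finite_Un)
  show ?thesis
  proof (cases "n ^ l = 0")
    case False
    with assms have "real (2 * card ?stay) < real (n ^ l)"
      unfolding sticky_def stay_prob_def card_walks by (simp add: field_simps)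
    then have "2 * card ?stay < n ^ l"
      by (simp only: of_nat_less_iff)
    with split show ?thesis by linarith
  qed (simp del: power_eq_0_iff)
qed

lemma card_nonsticky_le:
  assumes "n \<ge> 1"
  shows "n * card {x \<in> cube n. \<not> sticky n f l x} \<le> 2 * l * (\<Sum>x\<in>cube n. sensitivity n f x)"
proof -
  let ?K = "{x \<in> cube n. \<not> sticky n f l x}"
  have "card ?K * n ^ l = (\<Sum>x\<in>?K. n ^ l)"
    by simp
  also have "\<dots> \<le> (\<Sum>x\<in>?K. 2 * card (escaping_walks n f l x))"
    by (intro sum_mono nonsticky_imp_card_escaping_walks_ge) auto
  also have "\<dots> \<le> (\<Sum>x\<in>cube n. 2 * card (escaping_walks n f l x))"
    by (intro sum_mono2 finite_cube) auto
  also have "\<dots> = 2 * (\<Sum>x\<in>cube n. card (escaping_walks n f l x))"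
    by (simp add: sum_distrib_left)
  finally have "n * (card ?K * n ^ l) \<le> 2 * (n * (\<Sum>x\<in>cube n. card (escaping_walks n f l x)))"
    by simp
  also have "\<dots> \<le> 2 * (l * n ^ l * (\<Sum>x\<in>cube n. sensitivity n f x))"
    using sum_card_escaping_walks_le by simp
  finally have "n ^ l * (n * card ?K) \<le> n ^ l * (2 * l * (\<Sum>x\<in>cube n. sensitivity n f x))"
    by (simp add: algebra_simps)
  then show ?thesis
    using assms by simp
qed

theorem lemma3p4:
  fixes n l :: nat and f :: "bool list \<Rightarrow> bool"
  assumes "n \<ge> 1" and "l \<ge> 1"
  shows "real (card {x \<in> cube n. \<not> sticky n f l x}) / real (card (cube n))
           \<le> 2 * real l * total_influence n f / real n"
proof -
  have "real n * real (card {x \<in> cube n. \<not> sticky n f l x})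
          \<le> 2 * real l * real (\<Sum>x\<in>cube n. sensitivity n f x)"
    using card_nonsticky_le[OF assms(1), of f l] by (metis of_nat_le_iff of_nat_mult of_nat_numeral)
  then show ?thesis
    using assms(1) unfolding total_influence_eq_sum_sensitivity[OF assms(1)] card_cube
    by (simp add: field_simps)
qed

end
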